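(* Let $G$ be a hereditarily normal topological group and let $S,T\subseteq G$ be compact subspaces. Suppose $S$ is separable, $s\in S$ is a limit (non-isolated) point of $S$, and $t\in T$ has uncountable character in $T$. Then there exists a compact set $C\subseteq T$ with $t\in C$ such that $t$ has uncountable character in $C$ and $sC\subseteq St$, where $sC=\{sc: c\in C\}$ and $St=\{xt : x\in S\}$.
   Context: All spaces are assumed to be $T_1$. The group operation is written multiplicatively. The character of a point $t$ in a space $Y$ is the minimal cardinality of a local base at $t$ in $Y$. *)

theory Defs
  imports "HOL-Analysis.Analysis" "HOL-Algebra.Group"
begin

definition topological_group :: "('a, 'b) monoid_scheme \<Rightarrow> 'a topology \<Rightarrow> bool" where
  "topological_group G X \<longleftrightarrow>
     group G \<and> topspace X = carrier G \<and>
     continuous_map (prod_topology X X) X (\<lambda>(x, y). x \<otimes>\<^bsub>G\<^esub> y) \<and>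
     continuous_map X X (m_inv G)"

definition countable_character_at :: "'a topology \<Rightarrow> 'a \<Rightarrow> bool" where
  "countable_character_at X x \<longleftrightarrow>
     (\<exists>\<B>. countable \<B> \<and> (\<forall>V\<in>\<B>. openin X V \<and> x \<in> V) \<and>
          (\<forall>U. openin X U \<and> x \<in> U \<longrightarrow> (\<exists>V\<in>\<B>. V \<subseteq> U)))"

end

theory Submission
  imports Defs
begin

text \<open>Put \<open>C = {c \<in> T. s c \<in> S t}\<close>; it is compact and \<open>s C \<subseteq> S t\<close>. Suppose \<open>t\<close> had countable
character in \<open>C\<close>, so \<open>{t}\<close> is a countable intersection of open sets relative to \<open>C\<close>. Take a
countable \<open>D \<subseteq> S - {s}\<close> accumulating at \<open>s\<close> and, for each \<open>d \<in> D\<close>, a neighbourhood of \<open>t\<close> whose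
\<open>s\<close>-translate avoids a neighbourhood of \<open>d t\<close>. On the intersection \<open>K\<close> of \<open>T\<close> with all these
countably many neighbourhoods, \<open>s (K - {t})\<close> misses the closed set \<open>S t \<supseteq> D t\<close>, and \<open>D t\<close> misses
the closure of \<open>s (K - {t})\<close>; hereditary normality separates them by disjoint open sets
\<open>U \<supseteq> s (K - {t})\<close> and \<open>V \<supseteq> D t\<close>. Then the neighbourhoods \<open>d\<^sup>-\<^sup>1 (G - cl U)\<close> of \<open>t\<close>, \<open>d \<in> D\<close>, cut
\<open>K\<close> down to \<open>{t}\<close>: for \<open>c \<noteq> t\<close> in \<open>K\<close>, \<open>s c \<in> U\<close> forces \<open>d c \<in> U\<close> for some \<open>d \<in> D\<close> near \<open>s\<close>.
So \<open>t\<close> is a \<open>G\<^sub>\<delta>\<close> point of the compact set \<open>T\<close>, hence of countable character in \<open>T\<close>.\<close>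

definition countable_pseudocharacter_in :: "'a topology \<Rightarrow> 'a set \<Rightarrow> 'a \<Rightarrow> bool" where
  "countable_pseudocharacter_in X C t \<longleftrightarrow>
     (\<exists>\<F>. countable \<F> \<and> (\<forall>W\<in>\<F>. openin X W \<and> t \<in> W) \<and> C \<inter> \<Inter>\<F> \<subseteq> {t})"

lemma countable_character_imp_countable_pseudocharacter_in:
  assumes "t1_space X" and "t \<in> topspace (subtopology X C)" and "countable_character_at (subtopology X C) t"
  shows "countable_pseudocharacter_in X C t"
proof -
  obtain \<B> where "countable \<B>" and \<B>_open: "\<forall>V\<in>\<B>. openin (subtopology X C) V \<and> t \<in> V"
    and \<B>_base: "\<forall>U. openin (subtopology X C) U \<and> t \<in> U \<longrightarrow> (\<exists>V\<in>\<B>. V \<subseteq> U)"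
    using assms(3) unfolding countable_character_at_def by blast
  obtain w where w: "\<forall>V\<in>\<B>. openin X (w V) \<and> V = w V \<inter> C"
    using \<B>_open unfolding openin_subtopology by metis
  have sep: "C \<inter> \<Inter>(w ` \<B>) \<subseteq> {t}"
  proof
    fix c assume c: "c \<in> C \<inter> \<Inter>(w ` \<B>)"
    show "c \<in> {t}"
    proof (rule ccontr)
      assume "c \<notin> {t}"
      have "openin (subtopology X C) ((topspace X - {c}) \<inter> C)"
        using assms(1) by (simp add: openin_subtopology_Int t1_space_openin_delete_alt)
      moreover have "t \<in> (topspace X - {c}) \<inter> C"
        using assms(2) \<open>c \<notin> {t}\<close> by auto
      ultimately obtain V where "V \<in> \<B>" "V \<subseteq> (topspace X - {c}) \<inter> C"
        using \<B>_base by blast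
      then show False
        using c w by blast
    qed
  qed
  have "openin X W \<and> t \<in> W" if "W \<in> w ` \<B>" for W
    using that w \<B>_open by auto
  then show ?thesis
    unfolding countable_pseudocharacter_in_def using \<open>countable \<B>\<close> sep by blast
qed

lemma regular_space_closure_of_nbhd_subset:
  assumes "regular_space X" and "openin X W" and "t \<in> W"
  obtains V where "openin X V" "t \<in> V" "X closure_of V \<subseteq> W"
proof -
  have "closedin X (topspace X - W)" and "t \<in> topspace X - (topspace X - W)"
    using assms(2,3) openin_subset by auto
  then obtain V where "openin X V" "t \<in> V" "disjnt (topspace X - W) (X closure_of V)"
    using assms(1) unfolding regular_space by blast
  then show thesis
    using that closure_of_subset_topspace by (fastforce simp: disjnt_iff)
qed

lemma countable_pseudocharacter_in_imp_countable_character_at: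
  assumes "regular_space X" and "compactin X K" and "t \<in> K"
    and "countable_pseudocharacter_in X K t"
  shows "countable_character_at (subtopology X K) t"
proof -
  obtain \<F> where "countable \<F>" and \<F>_open: "\<forall>W\<in>\<F>. openin X W \<and> t \<in> W"
    and \<F>_sep: "K \<inter> \<Inter>\<F> \<subseteq> {t}"
    using assms(4) unfolding countable_pseudocharacter_in_def by blast
  have "\<forall>W\<in>\<F>. \<exists>V. openin X V \<and> t \<in> V \<and> X closure_of V \<subseteq> W"
    using regular_space_closure_of_nbhd_subset [OF assms(1)] \<F>_open by metis
  then obtain h where h: "\<forall>W\<in>\<F>. openin X (h W) \<and> t \<in> h W \<and> X closure_of (h W) \<subseteq> W"
    by metis
  define \<B> where "\<B> = (\<lambda>\<G>. K \<inter> (topspace X \<inter> \<Inter>(h ` \<G>))) ` {\<G>. finite \<G> \<and> \<G> \<subseteq> \<F>}"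
  have "\<exists>V\<in>\<B>. V \<subseteq> U" if U: "openin (subtopology X K) U" "t \<in> U" for U
  proof -
    obtain U' where "openin X U'" and U_eq: "U = U' \<inter> K"
      using U(1) by (auto simp: openin_subtopology)
    define \<U> where "\<U> = insert (topspace X - U') ((\<lambda>W. X closure_of (h W)) ` \<F>)"
    have "K \<inter> \<Inter>\<U> \<subseteq> K \<inter> \<Inter>\<F> - U'"
      using h by (auto simp: \<U>_def)
    also have "\<dots> = {}"
      using \<F>_sep U U_eq by blast
    finally have "K \<inter> \<Inter>\<U> = {}"
      by blast
    moreover have "\<forall>C\<in>\<U>. closedin X C"
      using \<open>openin X U'\<close> by (auto simp: \<U>_def)
    ultimately obtain \<E> where "finite \<E>" "\<E> \<subseteq> \<U>" and \<E>_empty: "K \<inter> \<Inter>\<E> = {}"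
      using assms(2) unfolding compactin_fip by blast
    then have "finite (\<E> - {topspace X - U'})" "\<E> - {topspace X - U'} \<subseteq> (\<lambda>W. X closure_of (h W)) ` \<F>"
      by (auto simp: \<U>_def)
    then obtain \<G> where \<G>: "\<G> \<subseteq> \<F>" "finite \<G>" "\<E> - {topspace X - U'} = (\<lambda>W. X closure_of (h W)) ` \<G>"
      using finite_subset_image by metis
    have "K \<inter> (topspace X \<inter> \<Inter>(h ` \<G>)) \<subseteq> U"
    proof
      fix c assume c: "c \<in> K \<inter> (topspace X \<inter> \<Inter>(h ` \<G>))"
      have "c \<in> X closure_of (h W)" if "W \<in> \<G>" for W
      proof -
        have "openin X (h W)"
          using that \<G>(1) h by blast
        then show ?thesis
          using c that closure_of_subset [OF openin_subset] by blast
      qed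
      then have "c \<in> \<Inter>(\<E> - {topspace X - U'})"
        using \<G>(3) by blast
      then show "c \<in> U"
        using c \<E>_empty U_eq by auto
    qed
    then show ?thesis
      using \<G> unfolding \<B>_def by blast
  qed
  moreover have "openin (subtopology X K) V \<and> t \<in> V" if V: "V \<in> \<B>" for V
  proof -
    obtain \<G> where \<G>: "finite \<G>" "\<G> \<subseteq> \<F>" and V_eq: "V = K \<inter> (topspace X \<inter> \<Inter>(h ` \<G>))"
      using V unfolding \<B>_def by blast
    have "openin X (topspace X \<inter> \<Inter>(h ` \<G>))"
      using \<G> h by (intro openin_Int_Inter) auto
    moreover have "t \<in> topspace X"
      using assms(2,3) compactin_subset_topspace by blast
    ultimately show ?thesis
      using \<G>(2) h assms(3) V_eq by (auto simp: openin_subtopology_Int2)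
  qed
  moreover have "countable \<B>"
    unfolding \<B>_def by (intro countable_image countable_Collect_finite_subset \<open>countable \<F>\<close>)
  ultimately show ?thesis
    unfolding countable_character_at_def by blast
qed

lemma topological_group_continuous_map_left_mult:
  assumes "topological_group G X" and "a \<in> carrier G"
  shows "continuous_map X X (\<lambda>c. a \<otimes>\<^bsub>G\<^esub> c)"
proof -
  have "continuous_map X (prod_topology X X) (\<lambda>c. (a, c))"
    using assms unfolding topological_group_def by (intro continuous_map_pairedI) auto
  then have "continuous_map X X ((\<lambda>(x, y). x \<otimes>\<^bsub>G\<^esub> y) \<circ> (\<lambda>c. (a, c)))"
    using assms(1) continuous_map_compose unfolding topological_group_def by blast
  then show ?thesis
    by (simp add: o_def)
qed

lemma topological_group_continuous_map_right_mult:
  assumes "topological_group G X" and "a \<in> carrier G"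
  shows "continuous_map X X (\<lambda>c. c \<otimes>\<^bsub>G\<^esub> a)"
proof -
  have "continuous_map X (prod_topology X X) (\<lambda>c. (c, a))"
    using assms unfolding topological_group_def by (intro continuous_map_pairedI) auto
  then have "continuous_map X X ((\<lambda>(x, y). x \<otimes>\<^bsub>G\<^esub> y) \<circ> (\<lambda>c. (c, a)))"
    using assms(1) continuous_map_compose unfolding topological_group_def by blast
  then show ?thesis
    by (simp add: o_def)
qed

lemma separable_derived_set_of_countable_subset:
  assumes "t1_space X" and "separable_space (subtopology X S)" and "s \<in> X derived_set_of S"
  obtains D where "countable D" "D \<subseteq> S - {s}" "s \<in> X closure_of D"
proof -
  obtain D0 where "countable D0" and D0_sub: "D0 \<subseteq> topspace X \<inter> S"
    and D0_dense: "S \<inter> X closure_of (S \<inter> D0) = topspace X \<inter> S"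
    using assms(2) unfolding separable_space_def closure_of_subtopology topspace_subtopology by blast
  have "s \<in> X closure_of (D0 - {s})"
    unfolding in_closure_of
  proof (intro conjI allI impI)
    show "s \<in> topspace X"
      using assms(3) in_derived_set_of by metis
  next
    fix N assume N: "s \<in> N \<and> openin X N"
    then obtain y where "y \<noteq> s" "y \<in> S" "y \<in> N"
      using assms(3) unfolding in_derived_set_of by meson
    have "y \<in> X closure_of (S \<inter> D0)"
      using D0_dense \<open>y \<in> S\<close> \<open>y \<in> N\<close> N openin_subset [of X N] by blast
    then have "y \<in> X closure_of D0"
      using closure_of_mono [of "S \<inter> D0" D0 X] by blast
    moreover have "openin X (N - {s})"
      using N assms(1) by (simp add: t1_space_openin_delete_alt)
    moreover have "y \<in> N - {s}"
      using \<open>y \<noteq> s\<close> \<open>y \<in> N\<close> by blast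
    ultimately obtain d where "d \<in> D0" "d \<in> N - {s}"
      unfolding in_closure_of by metis
    then show "\<exists>d. d \<in> D0 - {s} \<and> d \<in> N"
      by blast
  qed
  moreover have "D0 - {s} \<subseteq> S - {s}"
    using D0_sub by blast
  ultimately show thesis
    using that countable_Diff [OF \<open>countable D0\<close>] by blast
qed

lemma topological_group_left_translate_nbhd_avoids:
  assumes G: "topological_group G X" and "Hausdorff_space X"
    and s: "s \<in> carrier G" and d: "d \<in> carrier G" and t: "t \<in> carrier G" and "d \<noteq> s"
  obtains U where "openin X U" "t \<in> U" "d \<otimes>\<^bsub>G\<^esub> t \<notin> X closure_of ((\<lambda>c. s \<otimes>\<^bsub>G\<^esub> c) ` U)"
proof -
  have grp: "group G" and top: "topspace X = carrier G"
    using G unfolding topological_group_def by auto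
  have "s \<otimes>\<^bsub>G\<^esub> t \<noteq> d \<otimes>\<^bsub>G\<^esub> t"
    using group.right_cancel [OF grp t s d] \<open>d \<noteq> s\<close> by auto
  moreover have "s \<otimes>\<^bsub>G\<^esub> t \<in> topspace X" "d \<otimes>\<^bsub>G\<^esub> t \<in> topspace X"
    using s d t top group.subgroup_self [OF grp] subgroup.m_closed by metis+
  ultimately obtain W1 W2 where W: "openin X W1" "openin X W2" "s \<otimes>\<^bsub>G\<^esub> t \<in> W1"
    "d \<otimes>\<^bsub>G\<^esub> t \<in> W2" "disjnt W1 W2"
    using assms(2) unfolding Hausdorff_space_def by metis
  define U where "U = {c \<in> topspace X. s \<otimes>\<^bsub>G\<^esub> c \<in> W1}"
  have "openin X U"
    unfolding U_def
    using openin_continuous_map_preimage [OF topological_group_continuous_map_left_mult [OF G s] W(1)] .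
  moreover have "t \<in> U"
    using W(3) t top by (simp add: U_def)
  moreover have "W2 \<inter> X closure_of W1 = {}"
    using W(5) openin_Int_closure_of_eq_empty [OF W(2)] by (auto simp: disjnt_def)
  then have "d \<otimes>\<^bsub>G\<^esub> t \<notin> X closure_of ((\<lambda>c. s \<otimes>\<^bsub>G\<^esub> c) ` U)"
    using W(4) closure_of_mono [of "(\<lambda>c. s \<otimes>\<^bsub>G\<^esub> c) ` U" W1 X] by (auto simp: U_def)
  ultimately show thesis
    using that by blast
qed

lemma countable_pseudocharacter_in_if_separated_translates:
  assumes G: "topological_group G X" and "hereditarily normal_space X"
    and s: "s \<in> carrier G" and t: "t \<in> carrier G" and K: "K \<subseteq> carrier G"
    and "countable D" and D: "D \<subseteq> carrier G" and s_cl: "s \<in> X closure_of D"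
    and sep: "separatedin X ((\<lambda>c. s \<otimes>\<^bsub>G\<^esub> c) ` (K - {t})) ((\<lambda>d. d \<otimes>\<^bsub>G\<^esub> t) ` D)"
  shows "countable_pseudocharacter_in X K t"
proof -
  have top: "topspace X = carrier G"
    using G unfolding topological_group_def by auto
  obtain U V where "openin X U" "openin X V" and P_U: "(\<lambda>c. s \<otimes>\<^bsub>G\<^esub> c) ` (K - {t}) \<subseteq> U"
    and Q_V: "(\<lambda>d. d \<otimes>\<^bsub>G\<^esub> t) ` D \<subseteq> V" and "disjnt U V"
    using assms(2) sep unfolding hereditarily_normal_separation by metis
  have V_cl: "V \<inter> X closure_of U = {}"
    using openin_Int_closure_of_eq_empty [OF \<open>openin X V\<close>] \<open>disjnt U V\<close>
    by (auto simp: disjnt_def)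
  define R where "R d = {c \<in> topspace X. d \<otimes>\<^bsub>G\<^esub> c \<in> topspace X - X closure_of U}" for d
  have R: "openin X (R d) \<and> t \<in> R d" if "d \<in> D" for d
  proof
    show "openin X (R d)"
      unfolding R_def using that D
      by (intro openin_continuous_map_preimage [OF topological_group_continuous_map_left_mult [OF G]])
        (auto intro: openin_diff closedin_closure_of)
    have "d \<otimes>\<^bsub>G\<^esub> t \<in> V"
      using Q_V that by blast
    then show "t \<in> R d"
      using V_cl openin_subset [OF \<open>openin X V\<close>] t top by (auto simp: R_def)
  qed
  have "K \<inter> \<Inter>(R ` D) \<subseteq> {t}"
  proof
    fix c assume c: "c \<in> K \<inter> \<Inter>(R ` D)"
    show "c \<in> {t}"
    proof (rule ccontr)
      assume "c \<notin> {t}"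
      then have "s \<in> {x \<in> topspace X. x \<otimes>\<^bsub>G\<^esub> c \<in> U}"
        using c P_U s top by blast
      moreover have "openin X {x \<in> topspace X. x \<otimes>\<^bsub>G\<^esub> c \<in> U}"
        using c K by (intro openin_continuous_map_preimage
            [OF topological_group_continuous_map_right_mult [OF G] \<open>openin X U\<close>]) blast
      ultimately obtain d where "d \<in> D" "d \<otimes>\<^bsub>G\<^esub> c \<in> U"
        using s_cl unfolding in_closure_of by (metis (no_types, lifting) mem_Collect_eq)
      moreover have "U \<subseteq> X closure_of U"
        using \<open>openin X U\<close> by (simp add: closure_of_subset openin_subset)
      moreover have "c \<in> R d"
        using c \<open>d \<in> D\<close> by blast
      ultimately show False
        unfolding R_def by blast
    qed
  qed
  moreover have "countable (R ` D)"
    using \<open>countable D\<close> by blast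
  ultimately show ?thesis
    unfolding countable_pseudocharacter_in_def using R by blast
qed

lemma countable_pseudocharacter_in_from_left_translate_preimage:
  assumes G: "topological_group G X" and "Hausdorff_space X" and "hereditarily normal_space X"
    and "closedin X A" and T: "T \<subseteq> carrier G" and s: "s \<in> carrier G" and t: "t \<in> carrier G"
    and "countable D" and D: "D \<subseteq> carrier G - {s}" and "s \<in> X closure_of D"
    and D_A: "(\<lambda>d. d \<otimes>\<^bsub>G\<^esub> t) ` D \<subseteq> A"
    and "countable_pseudocharacter_in X {c \<in> T. s \<otimes>\<^bsub>G\<^esub> c \<in> A} t"
  shows "countable_pseudocharacter_in X T t"
proof -
  have grp: "group G" and top: "topspace X = carrier G"
    using G unfolding topological_group_def by auto
  have mult_closed: "x \<otimes>\<^bsub>G\<^esub> y \<in> carrier G" if "x \<in> carrier G" "y \<in> carrier G" for x y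
    using that group.subgroup_self [OF grp] subgroup.m_closed by metis
  obtain \<F> where "countable \<F>" and \<F>: "\<forall>W\<in>\<F>. openin X W \<and> t \<in> W"
    and \<F>_sep: "{c \<in> T. s \<otimes>\<^bsub>G\<^esub> c \<in> A} \<inter> \<Inter>\<F> \<subseteq> {t}"
    using assms(12) unfolding countable_pseudocharacter_in_def by blast
  have "\<exists>U. openin X U \<and> t \<in> U \<and> d \<otimes>\<^bsub>G\<^esub> t \<notin> X closure_of ((\<lambda>c. s \<otimes>\<^bsub>G\<^esub> c) ` U)"
    if "d \<in> D" for d
  proof -
    have "d \<in> carrier G" "d \<noteq> s"
      using D that by auto
    then obtain U where "openin X U" "t \<in> U" "d \<otimes>\<^bsub>G\<^esub> t \<notin> X closure_of ((\<lambda>c. s \<otimes>\<^bsub>G\<^esub> c) ` U)"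
      using topological_group_left_translate_nbhd_avoids [OF G assms(2) s _ t] by blast
    then show ?thesis
      by blast
  qed
  then obtain N where N: "\<forall>d\<in>D. openin X (N d) \<and> t \<in> N d \<and>
      d \<otimes>\<^bsub>G\<^esub> t \<notin> X closure_of ((\<lambda>c. s \<otimes>\<^bsub>G\<^esub> c) ` N d)"
    by metis
  define K where "K = T \<inter> \<Inter>\<F> \<inter> \<Inter>(N ` D)"
  have sep: "separatedin X ((\<lambda>c. s \<otimes>\<^bsub>G\<^esub> c) ` (K - {t})) ((\<lambda>d. d \<otimes>\<^bsub>G\<^esub> t) ` D)"
    unfolding separatedin_def
  proof (intro conjI)
    show "(\<lambda>c. s \<otimes>\<^bsub>G\<^esub> c) ` (K - {t}) \<subseteq> topspace X" "(\<lambda>d. d \<otimes>\<^bsub>G\<^esub> t) ` D \<subseteq> topspace X"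
      using T D s t mult_closed top unfolding K_def by blast+
    have "X closure_of ((\<lambda>d. d \<otimes>\<^bsub>G\<^esub> t) ` D) \<subseteq> A"
      using D_A \<open>closedin X A\<close> by (rule closure_of_minimal)
    moreover have "s \<otimes>\<^bsub>G\<^esub> c \<notin> A" if "c \<in> K - {t}" for c
      using that \<F>_sep unfolding K_def by blast
    ultimately show "(\<lambda>c. s \<otimes>\<^bsub>G\<^esub> c) ` (K - {t}) \<inter> X closure_of ((\<lambda>d. d \<otimes>\<^bsub>G\<^esub> t) ` D) = {}"
      by blast
    have "d \<otimes>\<^bsub>G\<^esub> t \<notin> X closure_of ((\<lambda>c. s \<otimes>\<^bsub>G\<^esub> c) ` (K - {t}))" if "d \<in> D" for d
    proof -
      have "(\<lambda>c. s \<otimes>\<^bsub>G\<^esub> c) ` (K - {t}) \<subseteq> (\<lambda>c. s \<otimes>\<^bsub>G\<^esub> c) ` N d"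
        using that unfolding K_def by blast
      then show ?thesis
        using N that closure_of_mono by blast
    qed
    then show "(\<lambda>d. d \<otimes>\<^bsub>G\<^esub> t) ` D \<inter> X closure_of ((\<lambda>c. s \<otimes>\<^bsub>G\<^esub> c) ` (K - {t})) = {}"
      by blast
  qed
  have "K \<subseteq> carrier G" "D \<subseteq> carrier G"
    using T D unfolding K_def by blast+
  then have "countable_pseudocharacter_in X K t"
    using countable_pseudocharacter_in_if_separated_translates
      [OF G assms(3) s t _ \<open>countable D\<close> _ assms(10) sep] by blast
  then obtain \<F>' where "countable \<F>'" and \<F>': "\<forall>W\<in>\<F>'. openin X W \<and> t \<in> W"
    and \<F>'_sep: "K \<inter> \<Inter>\<F>' \<subseteq> {t}"
    unfolding countable_pseudocharacter_in_def by blast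
  have "T \<inter> \<Inter>(\<F> \<union> N ` D \<union> \<F>') \<subseteq> {t}"
    using \<F>'_sep unfolding K_def by blast
  moreover have "countable (\<F> \<union> N ` D \<union> \<F>')"
    using \<open>countable \<F>\<close> \<open>countable D\<close> \<open>countable \<F>'\<close> by blast
  moreover have "\<forall>W\<in>\<F> \<union> N ` D \<union> \<F>'. openin X W \<and> t \<in> W"
    using \<F> N \<F>' by blast
  ultimately show ?thesis
    unfolding countable_pseudocharacter_in_def by blast
qed

theorem lemma2p7:
  fixes G :: "('a, 'b) monoid_scheme" and X :: "'a topology"
  assumes "topological_group G X"
    and "t1_space X"
    and "hereditarily normal_space X"
    and "compactin X S" and "compactin X T"
    and "separable_space (subtopology X S)"
    and "s \<in> S" and "s \<in> X derived_set_of S"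
    and "t \<in> T" and "\<not> countable_character_at (subtopology X T) t"
  shows "\<exists>C. compactin X C \<and> C \<subseteq> T \<and> t \<in> C \<and>
             \<not> countable_character_at (subtopology X C) t \<and>
             (\<lambda>c. s \<otimes>\<^bsub>G\<^esub> c) ` C \<subseteq> (\<lambda>x. x \<otimes>\<^bsub>G\<^esub> t) ` S"
proof -
  have top: "topspace X = carrier G"
    using assms(1) unfolding topological_group_def by blast
  have "normal_space X"
    using assms(3) unfolding hereditarily by (metis subtopology_topspace)
  then have "Hausdorff_space X" "regular_space X"
    using assms(2) normal_t1_imp_Hausdorff_space normal_t1_imp_regular_space by blast+
  have S: "S \<subseteq> carrier G" and T: "T \<subseteq> carrier G" and s: "s \<in> carrier G" and t: "t \<in> carrier G"
    using assms(4,5,7,9) compactin_subset_topspace top by blast+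
  define St where "St = (\<lambda>x. x \<otimes>\<^bsub>G\<^esub> t) ` S"
  have "closedin X St"
    unfolding St_def using \<open>Hausdorff_space X\<close> image_compactin [OF assms(4)]
      topological_group_continuous_map_right_mult [OF assms(1) t] compactin_imp_closedin by blast
  define C where "C = {c \<in> T. s \<otimes>\<^bsub>G\<^esub> c \<in> St}"
  have "C = {c \<in> topspace X. s \<otimes>\<^bsub>G\<^esub> c \<in> St} \<inter> T"
    using T top unfolding C_def by blast
  then have "compactin X C"
    using closedin_continuous_map_preimage [OF topological_group_continuous_map_left_mult [OF assms(1) s]
        \<open>closedin X St\<close>] closed_Int_compactin [OF _ assms(5)] by simp
  obtain D where "countable D" "D \<subseteq> S - {s}" "s \<in> X closure_of D"
    using separable_derived_set_of_countable_subset [OF assms(2,6,8)] .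
  have "\<not> countable_character_at (subtopology X C) t"
  proof
    assume "countable_character_at (subtopology X C) t"
    then have "countable_pseudocharacter_in X C t"
      using countable_character_imp_countable_pseudocharacter_in [OF assms(2)] assms(7,9) t top
      by (auto simp: C_def St_def)
    then have "countable_pseudocharacter_in X T t"
      using countable_pseudocharacter_in_from_left_translate_preimage [OF assms(1) \<open>Hausdorff_space X\<close>
          assms(3) \<open>closedin X St\<close> T s t \<open>countable D\<close> _ \<open>s \<in> X closure_of D\<close>]
        \<open>D \<subseteq> S - {s}\<close> S unfolding C_def St_def by blast
    then show False
      using countable_pseudocharacter_in_imp_countable_character_at
        [OF \<open>regular_space X\<close> assms(5,9)] assms(10) by blast
  qed
  moreover have "t \<in> C"
    using assms(7,9) unfolding C_def St_def by blast
  ultimately show ?thesis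
    using \<open>compactin X C\<close> unfolding C_def St_def by blast
qed

end
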